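(* Let $n\ge 2$ and let $(G(k))_{k\in\mathbb{N}}$ be a sequence of digraphs on $\mathcal{V}=\{1,\dots,n\}$ with knowledge sets evolving by the flooding update described in the context. Define $$\nu(k)=\begin{cases} k+2 & \text{if } k\le\lceil n/2\rceil-1,\\ n & \text{if } k\ge\lceil n/2\rceil.\end{cases}$$ If for every $k\in\{0,1,\dots,n-2\}$ the digraph $G(k)$ contains $\nu(k)(k)$ (i.e. every node has, at time $k$, a closed input-cord of cardinality greater than $\nu(k)-2$), then $|\{i\in\mathcal{V}: d_w\in\mathcal{K}_i(k+1)\}|\ge k+2$ for all $w\in\mathcal{V}$ and all $k\in\{0,1,\dots,n-2\}$.
   Context: Network: $\mathcal{V}=\{1,\dots,n\}$; node $i$ holds initial data $d_i\in\mathbb{R}$, pairwise distinct. At discrete times $k\in\mathbb{N}$ communication follows digraph $G(k)=(\mathcal{V},\mathcal{E}(k))$; node $i$ sends to $j$ at time $k$ iff $(i,j)\in\mathcal{E}(k)$. Knowledge sets: $\mathcal{K}_i(0)=\{d_i\}$ and $\mathcal{K}_j(k+1)=\mathcal{K}_j(k)\cup\bigcup_{i:(i,j)\in\mathcal{E}(k)}\mathcal{K}_i(k)$. An input-cord to node $i$ at time $k$ is an ordered list $(\mathcal{I}^i_1,\dots,\mathcal{I}^i_m)$ of pairwise distinct nodes of $\mathcal{V}\setminus\{i\}$ with $(\mathcal{I}^i_j,\mathcal{I}^i_{j+1})\in\mathcal{E}(k)$ for $j=1,\dots,m-1$ and $(\mathcal{I}^i_m,i)\in\mathcal{E}(k)$;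 its cardinality is $m$. It is closed if moreover $(i,\mathcal{I}^i_1)\in\mathcal{E}(k)$. For an integer $\chi$, node $i$ is contained in a $\chi(k)$-cycle if it has at time $k$ a closed input-cord of cardinality greater than $\chi-2$; $G(k)$ contains $\chi(k)$ if every node is contained in a $\chi(k)$-cycle. *)

theory Defs
  imports Complex_Main
begin

text \<open>Nodes are the naturals 1..n; a time-varying digraph is a map
  E :: nat => (nat * nat) set giving the edge set at each time k.
  (i,j) in E k means node i sends to node j at time k.\<close>

fun K :: "(nat \<Rightarrow> 'a) \<Rightarrow> (nat \<Rightarrow> (nat \<times> nat) set) \<Rightarrow> nat \<Rightarrow> nat \<Rightarrow> 'a set" where
  "K d E 0 j = {d j}"
| "K d E (Suc k) j = K d E k j \<union> (\<Union>i\<in>{i. (i, j) \<in> E k}. K d E k i)"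

definition input_cord :: "nat set \<Rightarrow> (nat \<Rightarrow> (nat \<times> nat) set) \<Rightarrow> nat \<Rightarrow> nat \<Rightarrow> nat list \<Rightarrow> bool" where
  "input_cord V E k i cs \<longleftrightarrow>
     cs \<noteq> [] \<and> distinct cs \<and> set cs \<subseteq> V - {i} \<and>
     (\<forall>j. Suc j < length cs \<longrightarrow> (cs ! j, cs ! Suc j) \<in> E k) \<and>
     (last cs, i) \<in> E k"

definition closed_input_cord :: "nat set \<Rightarrow> (nat \<Rightarrow> (nat \<times> nat) set) \<Rightarrow> nat \<Rightarrow> nat \<Rightarrow> nat list \<Rightarrow> bool" where
  "closed_input_cord V E k i cs \<longleftrightarrow> input_cord V E k i cs \<and> (i, hd cs) \<in> E k"

definition in_cycle :: "nat set \<Rightarrow> (nat \<Rightarrow> (nat \<times> nat) set) \<Rightarrow> int \<Rightarrow> nat \<Rightarrow> nat \<Rightarrow> bool" where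
  "in_cycle V E chi k i \<longleftrightarrow> (\<exists>cs. closed_input_cord V E k i cs \<and> int (length cs) > chi - 2)"

definition contains_cycle :: "nat set \<Rightarrow> (nat \<Rightarrow> (nat \<times> nat) set) \<Rightarrow> int \<Rightarrow> nat \<Rightarrow> bool" where
  "contains_cycle V E chi k \<longleftrightarrow> (\<forall>i\<in>V. in_cycle V E chi k i)"

definition nu :: "nat \<Rightarrow> nat \<Rightarrow> int" where
  "nu n k = (if int k \<le> \<lceil>real n / 2\<rceil> - 1 then int k + 2 else int n)"

end

theory Submission
  imports Defs
begin

text \<open>Let \<open>S(k)\<close> be the set of nodes that know \<open>d w\<close> at time \<open>k\<close>; it is monotone in \<open>k\<close>
  and contains \<open>w\<close>. If \<open>S(k+1) = S(k)\<close>, no edge of \<open>G(k)\<close> leads out of \<open>S(k)\<close>, so the closed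
  input-cord of \<open>w\<close>, which starts with an edge out of \<open>w\<close>, lies entirely in \<open>S(k)\<close>.
  Since \<open>\<nu>(k) \<ge> k + 2\<close>, that cord has at least \<open>k + 1\<close> nodes besides \<open>w\<close>, so
  \<open>|S(k)| \<ge> k + 2\<close>. Hence \<open>|S(k+1)| \<ge> min (|S(k)| + 1) (k + 2)\<close>, and induction on \<open>k\<close>
  starting from \<open>S(0) \<ni> w\<close> gives the claim.\<close>

definition informed :: "nat set \<Rightarrow> (nat \<Rightarrow> 'a) \<Rightarrow> (nat \<Rightarrow> (nat \<times> nat) set) \<Rightarrow> 'a \<Rightarrow> nat \<Rightarrow> nat set" where
  "informed V d E x k = {i\<in>V. x \<in> K d E k i}"

lemma K_Suc_edge: "(i, j) \<in> E k \<Longrightarrow> K d E k i \<subseteq> K d E (Suc k) j"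
  by auto

lemma own_data_in_K: "d i \<in> K d E k i"
  by (induction k) auto

lemma finite_informed: "finite V \<Longrightarrow> finite (informed V d E x k)"
  unfolding informed_def by simp

lemma informed_Suc_mono: "informed V d E x k \<subseteq> informed V d E x (Suc k)"
  unfolding informed_def by auto

lemma informed_Suc_stable_imp_closed:
  assumes "informed V d E x (Suc k) = informed V d E x k"
    and "p \<in> informed V d E x k" and "(p, q) \<in> E k" and "q \<in> V"
  shows "q \<in> informed V d E x k"
  using assms K_Suc_edge[of p q E k d] unfolding informed_def by blast

lemma closed_input_cord_subset_closed_set:
  assumes cord: "closed_input_cord V E k i cs"
    and "i \<in> A"
    and closed: "\<And>p q. p \<in> A \<Longrightarrow> (p, q) \<in> E k \<Longrightarrow> q \<in> V \<Longrightarrow> q \<in> A"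
  shows "set cs \<subseteq> A"
proof -
  from cord have inV: "set cs \<subseteq> V"
    and chain: "\<And>j. Suc j < length cs \<Longrightarrow> (cs ! j, cs ! Suc j) \<in> E k"
    and first: "(i, cs ! 0) \<in> E k"
    unfolding closed_input_cord_def input_cord_def by (auto simp: hd_conv_nth)
  have "cs ! j \<in> A" if "j < length cs" for j
    using that
  proof (induction j)
    case 0
    then have "cs ! 0 \<in> V" using inV by auto
    then show ?case using closed[OF \<open>i \<in> A\<close> first] by blast
  next
    case (Suc j)
    then have "cs ! j \<in> A" and "cs ! Suc j \<in> V"
      using inV by auto
    then show ?case
      using closed chain[OF Suc.prems] by blast
  qed
  then show ?thesis
    by (auto simp: in_set_conv_nth)
qed

lemma card_closed_input_cord:
  assumes "closed_input_cord V E k i cs"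
  shows "card (insert i (set cs)) = length cs + 1"
proof -
  from assms have "distinct cs" and "i \<notin> set cs"
    unfolding closed_input_cord_def input_cord_def by auto
  then show ?thesis
    by (simp add: distinct_card)
qed

lemma nu_ge: "n \<ge> 2 \<Longrightarrow> k \<le> n - 2 \<Longrightarrow> nu n k \<ge> int k + 2"
  unfolding nu_def by auto

lemma informed_card_Suc_ge:
  assumes "finite V" and "w \<in> V"
    and cycle: "in_cycle V E chi k w" and "chi \<ge> int k + 2"
    and card_k: "card (informed V d E (d w) k) \<ge> k + 1"
  shows "card (informed V d E (d w) (Suc k)) \<ge> k + 2"
proof (rule ccontr)
  let ?S = "informed V d E (d w)"
  assume small: "\<not> card (?S (Suc k)) \<ge> k + 2"
  have fin: "finite (?S (Suc k))"
    using \<open>finite V\<close> by (rule finite_informed)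
  have "card (?S k) \<le> card (?S (Suc k))"
    by (rule card_mono[OF fin informed_Suc_mono])
  with small card_k have "card (?S k) = card (?S (Suc k))"
    by linarith
  then have stable: "?S (Suc k) = ?S k"
    using card_subset_eq[OF fin informed_Suc_mono] by simp
  from cycle obtain cs where cord: "closed_input_cord V E k w cs"
    and long: "int (length cs) > chi - 2"
    unfolding in_cycle_def by blast
  have w_in: "w \<in> ?S k"
    using \<open>w \<in> V\<close> own_data_in_K unfolding informed_def by fast
  have "set cs \<subseteq> ?S k"
    using closed_input_cord_subset_closed_set[OF cord w_in]
      informed_Suc_stable_imp_closed[OF stable] by blast
  with w_in have "card (insert w (set cs)) \<le> card (?S (Suc k))"
    using fin stable by (simp add: card_mono)
  then show False
    using card_closed_input_cord[OF cord] long \<open>chi \<ge> int k + 2\<close> small by linarith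
qed

theorem theorem2:
  fixes n :: nat and d :: "nat \<Rightarrow> real" and E :: "nat \<Rightarrow> (nat \<times> nat) set"
  assumes "n \<ge> 2"
    and "inj_on d {1..n}"
    and "\<And>k. E k \<subseteq> {1..n} \<times> {1..n}"
    and "\<And>k. k \<le> n - 2 \<Longrightarrow> contains_cycle {1..n} E (nu n k) k"
  shows "\<forall>w\<in>{1..n}. \<forall>k\<le>n - 2. card {i\<in>{1..n}. d w \<in> K d E (Suc k) i} \<ge> k + 2"
proof (intro ballI allI impI)
  fix w k assume w: "w \<in> {1..n}" and "k \<le> n - 2"
  let ?S = "informed {1..n} d E (d w)"
  have step: "card (?S (Suc j)) \<ge> j + 2" if "j \<le> n - 2" and "card (?S j) \<ge> j + 1" for j
  proof (rule informed_card_Suc_ge[OF _ w _ _ that(2)])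
    show "in_cycle {1..n} E (nu n j) j w"
      using assms(4)[OF that(1)] w unfolding contains_cycle_def by blast
    show "nu n j \<ge> int j + 2"
      using nu_ge[OF assms(1) that(1)] .
  qed simp
  have "card (?S (Suc j)) \<ge> j + 2" if "j \<le> n - 2" for j
    using that
  proof (induction j)
    case 0
    have "w \<in> ?S 0"
      using w by (simp add: informed_def)
    then have "card (?S 0) \<ge> 1"
      using finite_informed[of "{1..n}"] card_gt_0_iff
      by (metis One_nat_def Suc_leI empty_iff finite_atLeastAtMost)
    then show ?case
      using step[OF "0"] by simp
  next
    case (Suc j)
    then show ?case
      using step by simp
  qed
  then show "card {i\<in>{1..n}. d w \<in> K d E (Suc k) i} \<ge> k + 2"
    using \<open>k \<le> n - 2\<close> unfolding informed_def by blast
qed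

end
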